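(* Consider a sample path of the CTAS sampling rule (run without stopping). For every $\varepsilon>0$, if there exists $t_0$ such that $\max_a|\hat w^*_a(t)-w^*_a|<\varepsilon$ for all $t\ge t_0$, then there exists $t_\varepsilon\ge t_0$ such that for all $t\ge t_\varepsilon$ and all arms $a$, \[ \left|\frac{\hat c_a(t)N_a(t)}{J(t)}-w^*_a\right|\le3(K-1)\varepsilon. \]
   Context: Setting: $K$ arms; arm $a$ has reward distribution in a one-parameter natural exponential family parametrized by the mean $\mu_a$ and cost distribution of mean $c_a$ supported in $[\ell,1]$, $\ell>0$; the best arm is unique. $N_a(t)$: number of pulls of $a$ up to $t$; $\hat\mu_a(t),\hat c_a(t)$: empirical mean reward and cost; $J(t)=\sum_{k\le t}C_k$ with $C_k$ the cost observed at round $k$. $d$ is the KL divergence within the family. For reward means $\boldsymbol{\mu}'$ with unique best arm and positive cost means $\boldsymbol{c}'$, $\boldsymbol{w}^*(\boldsymbol{\mu}',\boldsymbol{c}')$ is the maximizer over the simplex of $\inf_{\boldsymbol{\lambda}:a^*(\boldsymbol{\lambda})\ne a^*(\boldsymbol{\mu}')}\sum_a\frac{w_a}{c'_a}d(\mu'_a,\lambda_a)$; $\boldsymbol{w}^*=\boldsymbol{w}^*(\boldsymbol{\mu},\boldsymbol{c})$ and $\hat{\boldsymbol{w}}^*(t)=\boldsymbol{w}^*(\hat{\boldsymbol{\mu}}(t),\hat{\boldsymbol{c}}(t))$. CTAS sampling rule: pull each arm once; then at each time $t$, with $\mathcal{U}_t=\{a:N_a(t)<\sqrt t\}$, pull an arm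 in $\arg\min_aN_a(t)$ if $\mathcal{U}_t\neq\emptyset$, and otherwise an arm in $\arg\max_a(J(t)\hat w^*_a(t)-\hat c_a(t)N_a(t))$. *)

theory Defs
  imports "HOL-Analysis.Analysis"
begin

text \<open>Arms are 0,...,K-1. Rounds are numbered 1,2,3,...; A k is the arm pulled at
 round k, X k the reward and C k the cost observed at round k.\<close>

definition prob_simplex :: "nat \<Rightarrow> (nat \<Rightarrow> real) set" where
  "prob_simplex K = {w. (\<forall>a<K. 0 \<le> w a) \<and> (\<Sum>a<K. w a) = 1}"

definition is_best :: "nat \<Rightarrow> (nat \<Rightarrow> real) \<Rightarrow> nat \<Rightarrow> bool" where
  "is_best K m a \<longleftrightarrow> a < K \<and> (\<forall>b<K. b \<noteq> a \<longrightarrow> m b < m a)"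

definition best_arm :: "nat \<Rightarrow> (nat \<Rightarrow> real) \<Rightarrow> nat" where
  "best_arm K m = (SOME a. is_best K m a)"

definition alt :: "nat \<Rightarrow> (nat \<Rightarrow> real) \<Rightarrow> (nat \<Rightarrow> real) set" where
  "alt K m = {l. \<not> is_best K l (best_arm K m)}"

text \<open>d is the KL divergence of the exponential family\<close>
definition objective ::
  "(real \<Rightarrow> real \<Rightarrow> real) \<Rightarrow> nat \<Rightarrow> (nat \<Rightarrow> real) \<Rightarrow> (nat \<Rightarrow> real) \<Rightarrow> (nat \<Rightarrow> real) \<Rightarrow> real" where
  "objective d K m c w = (INF l\<in>alt K m. \<Sum>a<K. w a / c a * d (m a) (l a))"

definition is_opt_alloc ::
  "(real \<Rightarrow> real \<Rightarrow> real) \<Rightarrow> nat \<Rightarrow> (nat \<Rightarrow> real) \<Rightarrow> (nat \<Rightarrow> real) \<Rightarrow> (nat \<Rightarrow> real) \<Rightarrow> bool" where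
  "is_opt_alloc d K m c w \<longleftrightarrow> w \<in> prob_simplex K \<and> (\<forall>v\<in>prob_simplex K. objective d K m c v \<le> objective d K m c w)"

definition wstar ::
  "(real \<Rightarrow> real \<Rightarrow> real) \<Rightarrow> nat \<Rightarrow> (nat \<Rightarrow> real) \<Rightarrow> (nat \<Rightarrow> real) \<Rightarrow> (nat \<Rightarrow> real)" where
  "wstar d K m c = (SOME w. is_opt_alloc d K m c w)"

definition Npulls :: "(nat \<Rightarrow> nat) \<Rightarrow> nat \<Rightarrow> nat \<Rightarrow> nat" where
  "Npulls A a t = card {k\<in>{1..t}. A k = a}"

definition Jcost :: "(nat \<Rightarrow> real) \<Rightarrow> nat \<Rightarrow> real" where
  "Jcost C t = (\<Sum>k=1..t. C k)"

definition emp_mean :: "(nat \<Rightarrow> nat) \<Rightarrow> (nat \<Rightarrow> real) \<Rightarrow> nat \<Rightarrow> nat \<Rightarrow> real" where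
  "emp_mean A Y a t = (\<Sum>k\<in>{k\<in>{1..t}. A k = a}. Y k) / real (Npulls A a t)"

definition what :: "(real \<Rightarrow> real \<Rightarrow> real) \<Rightarrow> nat \<Rightarrow> (nat \<Rightarrow> nat) \<Rightarrow> (nat \<Rightarrow> real) \<Rightarrow> (nat \<Rightarrow> real) \<Rightarrow> nat \<Rightarrow> nat \<Rightarrow> real" where
  "what d K A X C t = wstar d K (\<lambda>a. emp_mean A X a t) (\<lambda>a. emp_mean A C a t)"

definition ctas :: "(real \<Rightarrow> real \<Rightarrow> real) \<Rightarrow> nat \<Rightarrow> (nat \<Rightarrow> nat) \<Rightarrow> (nat \<Rightarrow> real) \<Rightarrow> (nat \<Rightarrow> real) \<Rightarrow> bool" where
  "ctas d K A X C \<longleftrightarrow>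
     (\<forall>k\<ge>1. A k < K) \<and>
     {A k | k. k \<in> {1..K}} = {..<K} \<and>
     (\<forall>t\<ge>K.
        (if {a. a < K \<and> real (Npulls A a t) < sqrt (real t)} \<noteq> {}
         then (\<forall>b<K. Npulls A (A (Suc t)) t \<le> Npulls A b t)
         else (\<forall>b<K. Jcost C t * what d K A X C t b - emp_mean A C b t * real (Npulls A b t)
                      \<le> Jcost C t * what d K A X C t (A (Suc t))
                         - emp_mean A C (A (Suc t)) t * real (Npulls A (A (Suc t)) t))))"

end

theory Submission
  imports Defs "HOL-Analysis.Analysis"
begin

text \<open>Let \<open>S\<^sub>a(t) = \<hat>c\<^sub>a(t) N\<^sub>a(t)\<close> (\<open>pull_sum A C a t\<close>) be the cost spent on arm \<open>a\<close>
  up to time \<open>t\<close>. When CTAS pulls \<open>a\<close> at time \<open>t + 1\<close>, either \<open>a\<close> is under-explored, so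
  \<open>S\<^sub>a(t) \<le> N\<^sub>a(t) < \<surd>t\<close>, or \<open>a\<close> maximises \<open>J(t) \<hat>w\<^sub>b(t) - S\<^sub>b(t)\<close>, whose sum over
  all arms is zero, so \<open>S\<^sub>a(t) \<le> J(t) \<hat>w\<^sub>a(t) \<le> J(t) (w\<^sub>a + \<epsilon>)\<close>. Since each pull raises
  \<open>S\<^sub>a\<close> by at most 1, \<open>S\<^sub>a(t) \<le> J(t) (w\<^sub>a + \<epsilon>) + O(\<surd>t)\<close>, and \<open>J(t) \<ge> \<ell> t\<close> turns this
  into \<open>S\<^sub>a(t) / J(t) \<le> w\<^sub>a + 2\<epsilon>\<close> eventually. Both the shares \<open>S\<^sub>a(t) / J(t)\<close> and \<open>w\<close> sum
  to 1, so the upper deviations of the other \<open>K - 1\<close> arms bound the lower deviation of \<open>a\<close>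
  by \<open>2 (K - 1) \<epsilon>\<close>.\<close>

definition pull_sum :: "(nat \<Rightarrow> nat) \<Rightarrow> (nat \<Rightarrow> real) \<Rightarrow> nat \<Rightarrow> nat \<Rightarrow> real" where
  "pull_sum A Y a t = (\<Sum>k\<in>{k\<in>{1..t}. A k = a}. Y k)"

lemma emp_mean_mult_Npulls: "emp_mean A Y a t * real (Npulls A a t) = pull_sum A Y a t"
proof (cases "Npulls A a t = 0")
  case True
  then have no_pulls: "{k\<in>{1..t}. A k = a} = {}"
    by (simp add: Npulls_def)
  show ?thesis
    unfolding emp_mean_def pull_sum_def no_pulls by simp
qed (simp add: emp_mean_def pull_sum_def)

lemma sum_pull_sum:
  assumes "\<forall>k\<ge>1. A k < K"
  shows "(\<Sum>a<K. pull_sum A Y a t) = Jcost Y t"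
  unfolding pull_sum_def Jcost_def by (rule sum.group) (use assms in auto)

lemma pull_sum_Suc:
  "pull_sum A Y a (Suc t) = pull_sum A Y a t + (if A (Suc t) = a then Y (Suc t) else 0)"
proof -
  have "{k\<in>{1..Suc t}. A k = a} = {k\<in>{1..t}. A k = a} \<union> (if A (Suc t) = a then {Suc t} else {})"
    by (auto simp: le_Suc_eq)
  then show ?thesis
    by (simp add: pull_sum_def sum.union_disjoint)
qed

lemma pull_sum_le_Npulls:
  assumes "\<forall>k\<ge>1. Y k \<le> 1"
  shows "pull_sum A Y a t \<le> real (Npulls A a t)"
proof -
  have "pull_sum A Y a t \<le> (\<Sum>k\<in>{k\<in>{1..t}. A k = a}. 1)"
    unfolding pull_sum_def by (rule sum_mono) (use assms in auto)
  then show ?thesis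
    by (simp add: Npulls_def)
qed

lemma Npulls_le: "Npulls A a t \<le> t"
proof -
  have "Npulls A a t \<le> card {1..t}"
    unfolding Npulls_def by (rule card_mono) auto
  then show ?thesis
    by simp
qed

lemma Jcost_lower_bound:
  assumes "\<forall>k\<ge>1. l \<le> C k"
  shows "l * real t \<le> Jcost C t"
  using sum_mono[of "{1..t}" "\<lambda>_. l" C] assms by (simp add: Jcost_def mult.commute)

lemma Jcost_pos:
  assumes "0 < l" and "\<forall>k\<ge>1. l \<le> C k" and "1 \<le> t"
  shows "0 < Jcost C t"
proof -
  have "0 < l * real t"
    using assms(1,3) by simp
  then show ?thesis
    using Jcost_lower_bound[OF assms(2), of t] by linarith
qed

lemma mono_Jcost:
  assumes "\<forall>k\<ge>1. 0 \<le> C k"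
  shows "mono (Jcost C)"
  by (rule incseq_SucI) (simp add: Jcost_def assms)

lemma wstar_in_prob_simplex:
  assumes "\<exists>w. is_opt_alloc d K m c w"
  shows "wstar d K m c \<in> prob_simplex K"
  using someI_ex[OF assms] by (simp add: wstar_def is_opt_alloc_def)

lemma max_of_zero_sum_nonneg:
  fixes x :: "nat \<Rightarrow> real"
  assumes "(\<Sum>b<K. x b) = 0" and "a < K" and "\<forall>b<K. x b \<le> x a"
  shows "0 \<le> x a"
proof -
  have "(\<Sum>b<K. x b) \<le> (\<Sum>b<K. x a)"
    by (rule sum_mono) (use assms(3) in auto)
  then have "0 \<le> real K * x a"
    using assms(1) by simp
  then show ?thesis
    using assms(2) by (simp add: zero_le_mult_iff)
qed

lemma ctas_pull_sum_pulled_arm_le: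
  assumes rule: "ctas d K A X C" and C_le: "\<forall>k\<ge>1. C k \<le> 1" and "K \<le> t"
    and what_simplex: "what d K A X C t \<in> prob_simplex K"
  shows "pull_sum A C (A (Suc t)) t \<le> max (Jcost C t * what d K A X C t (A (Suc t))) (sqrt (real t))"
proof -
  let ?a = "A (Suc t)" and ?wh = "what d K A X C t"
    and ?explore = "{a. a < K \<and> real (Npulls A a t) < sqrt (real t)} \<noteq> {}"
  have arms: "\<forall>k\<ge>1. A k < K"
    using rule by (simp add: ctas_def)
  have step: "if ?explore
      then (\<forall>b<K. Npulls A ?a t \<le> Npulls A b t)
      else (\<forall>b<K. Jcost C t * ?wh b - emp_mean A C b t * real (Npulls A b t)
                  \<le> Jcost C t * ?wh ?a - emp_mean A C ?a t * real (Npulls A ?a t))"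
    using rule[unfolded ctas_def] \<open>K \<le> t\<close> by blast
  show ?thesis
  proof (cases ?explore)
    case True
    then obtain b where "b < K" and b_rare: "real (Npulls A b t) < sqrt (real t)"
      by auto
    then have "Npulls A ?a t \<le> Npulls A b t"
      using step[unfolded if_P[OF True]] by blast
    then have "pull_sum A C ?a t \<le> sqrt (real t)"
      using pull_sum_le_Npulls[OF C_le, of A ?a t] b_rare by linarith
    then show ?thesis
      by simp
  next
    case False
    let ?x = "\<lambda>b. Jcost C t * ?wh b - pull_sum A C b t"
    have a_max: "\<forall>b<K. ?x b \<le> ?x ?a"
      using step[unfolded if_not_P[OF False]] by (simp only: emp_mean_mult_Npulls)
    have "(\<Sum>b<K. ?wh b) = 1"
      using what_simplex by (simp add: prob_simplex_def)
    then have "(\<Sum>b<K. ?x b) = 0"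
      by (simp add: sum_subtractf sum_distrib_left[symmetric] sum_pull_sum[OF arms])
    then have "0 \<le> ?x ?a"
      using max_of_zero_sum_nonneg[OF _ _ a_max] arms by simp
    then show ?thesis
      by simp
  qed
qed

lemma ctas_pull_sum_Suc_le:
  assumes "ctas d K A X C" and "\<forall>k\<ge>1. C k \<le> 1" and "K \<le> t"
    and "what d K A X C t \<in> prob_simplex K"
  shows "pull_sum A C a (Suc t)
    \<le> max (pull_sum A C a t) (max (Jcost C t * what d K A X C t a) (sqrt (real t)) + 1)"
  using ctas_pull_sum_pulled_arm_le[OF assms] assms(2)[rule_format, of "Suc t"]
  by (auto simp: pull_sum_Suc)

lemma le_max_start_if_step_le_max:
  fixes S g :: "nat \<Rightarrow> real"
  assumes "mono g" and step_le: "\<And>t. T \<le> t \<Longrightarrow> S (Suc t) \<le> max (S t) (g t + 1)" and "T \<le> t"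
  shows "S t \<le> max (S T) (g t + 1)"
  using \<open>T \<le> t\<close>
proof (induction t rule: dec_induct)
  case base
  show ?case by simp
next
  case (step t)
  have "g t \<le> g (Suc t)"
    using \<open>mono g\<close> by (simp add: monoD)
  then show ?case
    using step.IH step_le[OF step.hyps(1)] by linarith
qed

lemma eventually_add_sqrt_le_mult:
  fixes T \<delta> :: real
  assumes "0 < \<delta>"
  shows "eventually (\<lambda>t::nat. T + sqrt (real t) \<le> \<delta> * real t) sequentially"
proof -
  have "(\<lambda>t::nat. T * inverse (real t) + inverse (sqrt (real t))) \<longlonglongrightarrow> 0"
    using tendsto_add_zero[OF tendsto_mult_right_zero[OF lim_inverse_n]
        tendsto_inverse_0_at_top[OF filterlim_compose[OF sqrt_at_top filterlim_real_sequentially]]] .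
  then have "eventually (\<lambda>t::nat. T * inverse (real t) + inverse (sqrt (real t)) < \<delta>) sequentially"
    using assms by (rule order_tendstoD)
  moreover have "eventually (\<lambda>t::nat. 1 \<le> t) sequentially"
    by (rule eventually_ge_at_top)
  ultimately show ?thesis
  proof eventually_elim
    case (elim t)
    have "sqrt (real t) * sqrt (real t) = real t"
      by simp
    then have "(T * inverse (real t) + inverse (sqrt (real t))) * real t = T + sqrt (real t)"
      using elim(2) by (simp add: field_simps)
    then show ?case
      using mult_strict_right_mono[OF elim(1), of "real t"] elim(2) by simp
  qed
qed

lemma abs_sub_le_if_sum_eq_and_upper:
  fixes u w :: "nat \<Rightarrow> real"
  assumes sum_eq: "(\<Sum>b<K. u b) = (\<Sum>b<K. w b)" and upper: "\<forall>b<K. u b \<le> w b + \<delta>" and "a < K"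
  shows "\<bar>u a - w a\<bar> \<le> (real K - 1) * \<delta>"
proof -
  let ?others = "{..<K} - {a}"
  have "(\<Sum>b<K. u b - w b) = 0"
    using sum_eq by (simp add: sum_subtractf)
  then have others_sum: "u a - w a = - (\<Sum>b\<in>?others. u b - w b)"
    using \<open>a < K\<close> by (simp add: sum.remove)
  have "(\<Sum>b\<in>?others. u b - w b) \<le> (\<Sum>b\<in>?others. \<delta>)"
    by (rule sum_mono) (use upper in auto)
  also have "\<dots> = (real K - 1) * \<delta>"
    using \<open>a < K\<close> by (simp add: of_nat_diff)
  finally have lower: "- ((real K - 1) * \<delta>) \<le> u a - w a"
    using others_sum by linarith
  show ?thesis
  proof (cases "K = 1")
    case True
    then have "?others = {}"
      using \<open>a < K\<close> by auto
    then have "u a - w a = 0"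
      using others_sum by (simp only: sum.empty)
    then show ?thesis
      using True by simp
  next
    case False
    have "(\<Sum>b<K. u b - w b) \<le> (\<Sum>b<K. \<delta>)"
      by (rule sum_mono) (use upper in auto)
    then have "0 \<le> \<delta>"
      using sum_eq \<open>a < K\<close> by (simp add: sum_subtractf zero_le_mult_iff)
    moreover have "1 \<le> real K - 1"
      using False \<open>a < K\<close> by linarith
    ultimately have "\<delta> \<le> (real K - 1) * \<delta>"
      using mult_right_mono[of 1 "real K - 1" \<delta>] by simp
    then show ?thesis
      using lower upper \<open>a < K\<close> by auto
  qed
qed

lemma sum_cost_share:
  assumes "\<forall>k\<ge>1. A k < K" and "0 < Jcost C t"
  shows "(\<Sum>a<K. pull_sum A C a t / Jcost C t) = 1"
  using assms by (simp add: sum_divide_distrib[symmetric] sum_pull_sum)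

lemma ctas_pull_sum_le:
  assumes rule: "ctas d K A X C" and C_range: "\<forall>k\<ge>1. 0 \<le> C k \<and> C k \<le> 1"
    and what_exists: "\<forall>t\<ge>K. \<exists>w. is_opt_alloc d K (\<lambda>a. emp_mean A X a t) (\<lambda>a. emp_mean A C a t) w"
    and "0 \<le> \<rho>" and what_le: "\<forall>t\<ge>t0. what d K A X C t a \<le> \<rho>"
    and "max t0 K \<le> t"
  shows "pull_sum A C a t \<le> Jcost C t * \<rho> + (real (max t0 K) + 1 + sqrt (real t))"
proof -
  define T where "T = max t0 K"
  define g where "g s = max (Jcost C s * \<rho>) (sqrt (real s))" for s
  have C_le: "\<forall>k\<ge>1. C k \<le> 1"
    using C_range by blast
  have Jcost_nonneg: "0 \<le> Jcost C s" for s
    using Jcost_lower_bound[of 0 C s] C_range by simp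
  have "pull_sum A C a t \<le> max (pull_sum A C a T) (g t + 1)"
  proof (rule le_max_start_if_step_le_max)
    show "mono g"
      unfolding g_def using mono_Jcost[of C] C_range \<open>0 \<le> \<rho>\<close>
      by (intro monoI max.mono mult_right_mono) (auto simp: monoD)
  next
    fix s assume "T \<le> s"
    then have "K \<le> s" and "t0 \<le> s"
      by (auto simp: T_def)
    have simplex: "what d K A X C s \<in> prob_simplex K"
      unfolding what_def using wstar_in_prob_simplex what_exists \<open>K \<le> s\<close> by blast
    have "Jcost C s * what d K A X C s a \<le> Jcost C s * \<rho>"
      using what_le \<open>t0 \<le> s\<close> Jcost_nonneg by (simp add: mult_left_mono)
    then show "pull_sum A C a (Suc s) \<le> max (pull_sum A C a s) (g s + 1)"
      using ctas_pull_sum_Suc_le[OF rule C_le \<open>K \<le> s\<close> simplex, of a] by (auto simp: g_def)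
  qed (use \<open>max t0 K \<le> t\<close> T_def in simp)
  moreover have "pull_sum A C a T \<le> real T"
    using pull_sum_le_Npulls[OF C_le, of A a T] Npulls_le[of A a T] by linarith
  moreover have "0 \<le> Jcost C t * \<rho>"
    using Jcost_nonneg[of t] \<open>0 \<le> \<rho>\<close> by simp
  ultimately show ?thesis
    using real_sqrt_ge_zero[of t] unfolding g_def T_def[symmetric]
    by (simp only: le_max_iff_disj max.bounded_iff) linarith
qed

lemma ctas_cost_share_eventually_le:
  fixes w :: "nat \<Rightarrow> real"
  assumes rule: "ctas d K A X C" and "0 < lmin" and C_range: "\<forall>k\<ge>1. lmin \<le> C k \<and> C k \<le> 1"
    and what_exists: "\<forall>t\<ge>K. \<exists>w. is_opt_alloc d K (\<lambda>a. emp_mean A X a t) (\<lambda>a. emp_mean A C a t) w"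
    and w_nonneg: "\<forall>a<K. 0 \<le> w a" and "0 < \<epsilon>"
    and what_le: "\<forall>t\<ge>t0. \<forall>a<K. what d K A X C t a \<le> w a + \<epsilon>"
  shows "\<exists>N. \<forall>t\<ge>N. \<forall>a<K. pull_sum A C a t / Jcost C t \<le> w a + 2 * \<epsilon>"
proof -
  let ?T = "max t0 K"
  have C_lower: "\<forall>k\<ge>1. lmin \<le> C k" and C_unit: "\<forall>k\<ge>1. 0 \<le> C k \<and> C k \<le> 1"
    using C_range \<open>0 < lmin\<close> by force+
  obtain N where N: "\<And>t. N \<le> t \<Longrightarrow> real ?T + 1 + sqrt (real t) \<le> \<epsilon> * lmin * real t"
    using eventually_add_sqrt_le_mult[of "\<epsilon> * lmin" "real ?T + 1"] \<open>0 < \<epsilon>\<close> \<open>0 < lmin\<close>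
    unfolding eventually_sequentially by auto
  show ?thesis
  proof (intro exI allI impI)
    fix t a assume "max N (max ?T 1) \<le> t" and "a < K"
    then have "N \<le> t" "?T \<le> t" "1 \<le> t"
      by auto
    have "\<epsilon> * lmin * real t \<le> \<epsilon> * Jcost C t"
      using Jcost_lower_bound[OF C_lower, of t] \<open>0 < \<epsilon>\<close> by (simp add: mult.assoc)
    then have slack: "real ?T + 1 + sqrt (real t) \<le> \<epsilon> * Jcost C t"
      using N[OF \<open>N \<le> t\<close>] by linarith
    have "0 \<le> w a + \<epsilon>"
      using w_nonneg \<open>a < K\<close> \<open>0 < \<epsilon>\<close> by simp
    then have "pull_sum A C a t \<le> Jcost C t * (w a + \<epsilon>) + (real ?T + 1 + sqrt (real t))"
      using ctas_pull_sum_le[OF rule C_unit what_exists _ _ \<open>?T \<le> t\<close>] what_le \<open>a < K\<close> by blast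
    also have "\<dots> \<le> Jcost C t * (w a + 2 * \<epsilon>)"
      using slack by (simp add: algebra_simps)
    finally show "pull_sum A C a t / Jcost C t \<le> w a + 2 * \<epsilon>"
      using Jcost_pos[OF \<open>0 < lmin\<close> C_lower \<open>1 \<le> t\<close>] by (simp add: divide_le_eq mult.commute)
  qed
qed

theorem lemma5:
  fixes d :: "real \<Rightarrow> real \<Rightarrow> real" and K :: nat and lmin :: real
    and \<mu> c :: "nat \<Rightarrow> real"
    and A :: "nat \<Rightarrow> nat" and X C :: "nat \<Rightarrow> real"
  assumes l_pos: "0 < lmin"
    and c_range: "\<forall>a<K. lmin \<le> c a \<and> c a \<le> 1"
    and unique_best: "\<exists>!a. is_best K \<mu> a"
    and wstar_exists: "\<exists>w. is_opt_alloc d K \<mu> c w"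
    and what_exists: "\<forall>t\<ge>K. \<exists>w. is_opt_alloc d K (\<lambda>a. emp_mean A X a t) (\<lambda>a. emp_mean A C a t) w"
    and C_range: "\<forall>k\<ge>1. lmin \<le> C k \<and> C k \<le> 1"
    and rule: "ctas d K A X C"
  shows "\<forall>\<epsilon>>0. \<forall>t0.
           (\<forall>t\<ge>t0. \<forall>a<K. \<bar>what d K A X C t a - wstar d K \<mu> c a\<bar> < \<epsilon>) \<longrightarrow>
           (\<exists>teps\<ge>t0. \<forall>t\<ge>teps. \<forall>a<K.
              \<bar>emp_mean A C a t * real (Npulls A a t) / Jcost C t - wstar d K \<mu> c a\<bar>
                \<le> 3 * (real K - 1) * \<epsilon>)"
proof (intro allI impI)
  fix \<epsilon> :: real and t0 :: nat
  assume "0 < \<epsilon>" and close: "\<forall>t\<ge>t0. \<forall>a<K. \<bar>what d K A X C t a - wstar d K \<mu> c a\<bar> < \<epsilon>"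
  let ?w = "wstar d K \<mu> c"
  have w_simplex: "?w \<in> prob_simplex K"
    using wstar_in_prob_simplex[OF wstar_exists] .
  have arms: "\<forall>k\<ge>1. A k < K"
    using rule by (simp add: ctas_def)
  have w_nonneg: "\<forall>a<K. 0 \<le> ?w a"
    using w_simplex by (simp add: prob_simplex_def)
  have what_le: "\<forall>t\<ge>t0. \<forall>a<K. what d K A X C t a \<le> ?w a + \<epsilon>"
    using close by (force simp: abs_less_iff)
  obtain N where N: "\<forall>t\<ge>N. \<forall>a<K. pull_sum A C a t / Jcost C t \<le> ?w a + 2 * \<epsilon>"
    using ctas_cost_share_eventually_le[OF rule l_pos C_range what_exists w_nonneg \<open>0 < \<epsilon>\<close> what_le]
    by blast
  show "\<exists>teps\<ge>t0. \<forall>t\<ge>teps. \<forall>a<K.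
      \<bar>emp_mean A C a t * real (Npulls A a t) / Jcost C t - ?w a\<bar> \<le> 3 * (real K - 1) * \<epsilon>"
  proof (intro exI[of _ "max N (max t0 1)"] conjI allI impI)
    fix t a assume t_large: "max N (max t0 1) \<le> t" and "a < K"
    have "0 < Jcost C t"
      using Jcost_pos[of lmin C t] l_pos C_range t_large by simp
    then have "(\<Sum>b<K. pull_sum A C b t / Jcost C t) = (\<Sum>b<K. ?w b)"
      using sum_cost_share[OF arms] w_simplex by (simp add: prob_simplex_def)
    moreover have "\<forall>b<K. pull_sum A C b t / Jcost C t \<le> ?w b + 2 * \<epsilon>"
      using N t_large by simp
    ultimately have "\<bar>pull_sum A C a t / Jcost C t - ?w a\<bar> \<le> (real K - 1) * (2 * \<epsilon>)"
      using abs_sub_le_if_sum_eq_and_upper \<open>a < K\<close> by blast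
    also have "\<dots> \<le> 3 * (real K - 1) * \<epsilon>"
      using \<open>0 < \<epsilon>\<close> \<open>a < K\<close> by (simp add: mult_right_mono)
    finally show "\<bar>emp_mean A C a t * real (Npulls A a t) / Jcost C t - ?w a\<bar> \<le> 3 * (real K - 1) * \<epsilon>"
      by (simp add: emp_mean_mult_Npulls)
  qed simp
qed

end
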